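(* Let $\omega$ be a closed self-dual 2-form on a neighborhood $N(C)\cong C\times D^3$ of a circle $C$ in an oriented Riemannian 4-manifold, with coordinates $(\theta,x_1,x_2,x_3)$ ($\theta\in C=\mathbb{R}/2\pi\mathbb{Z}$, $x\in D^3$) such that $d\theta,dx_1,dx_2,dx_3$ are orthonormal at each point $(\theta,0)$, and suppose $\omega$ vanishes on $C=C\times\{0\}$ and has the form $$\omega=L_1(\theta,x)(d\theta\, dx_1+dx_2\, dx_3)+L_2(\theta,x)(d\theta\, dx_2+dx_3\, dx_1)+L_3(\theta,x)(d\theta\, dx_3+dx_1\, dx_2)+Q,$$ where $L_i(\theta,x)=\sum_{j=1}^3L_{ij}(\theta)x_j$ and $Q$ is a 2-form whose coefficients are of order at least two in the $x_i$. Then for every $\theta$ the matrix $(L_{ij}(\theta))$ is symmetric and traceless. *)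

theory Defs
  imports "HOL-Analysis.Analysis"
begin

text \<open>Coordinates (theta, x1, x2, x3) on the chart C x D^3 of the tubular neighbourhood.
  Index 0 is theta, indices 1,2,3 are x1,x2,x3. A point is a quadruple of reals;
  theta ranges over all of R and every datum is required to be 2 pi periodic in theta.\<close>

type_synonym pt = "real \<times> real \<times> real \<times> real"

definition crd :: "nat \<Rightarrow> pt \<Rightarrow> real" where
  "crd a p = (if a = 0 then fst p else if a = 1 then fst (snd p)
              else if a = 2 then fst (snd (snd p)) else snd (snd (snd p)))"

definition ev :: "nat \<Rightarrow> pt" where
  "ev a = (if a = 0 then (1,0,0,0) else if a = 1 then (0,1,0,0)
           else if a = 2 then (0,0,1,0) else (0,0,0,1))"

definition rad2 :: "pt \<Rightarrow> real" where
  "rad2 p = (crd 1 p)^2 + (crd 2 p)^2 + (crd 3 p)^2"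

definition NC :: "pt set" where
  "NC = {p. rad2 p < 1}"

definition pd :: "nat \<Rightarrow> (pt \<Rightarrow> real) \<Rightarrow> pt \<Rightarrow> real" where
  "pd a f p = deriv (\<lambda>t. f (p + t *\<^sub>R ev a)) 0"

text \<open>A 2-form is given by antisymmetric coefficients w a b (a,b < 4), i.e.
  omega = sum over a<b of w a b dx^a dx^b. Closedness d omega = 0 in components.\<close>
definition closed_form2 :: "(nat \<Rightarrow> nat \<Rightarrow> pt \<Rightarrow> real) \<Rightarrow> pt set \<Rightarrow> bool" where
  "closed_form2 w U \<longleftrightarrow>
     (\<forall>a<4. \<forall>b<4. \<forall>p\<in>U. w a b differentiable (at p)) \<and>
     (\<forall>a<4. \<forall>b<4. \<forall>c<4. \<forall>p\<in>U.
        pd a (w b c) p + pd b (w c a) p + pd c (w a b) p = 0)"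

definition levi :: "nat \<Rightarrow> nat \<Rightarrow> nat \<Rightarrow> nat \<Rightarrow> real" where
  "levi a b c d = (let l = [a,b,c,d] in
     if distinct l \<and> set l = {0,1,2,3}
     then (-1) ^ card {(i,j). i < j \<and> j < 4 \<and> l!i > l!j} else 0)"

definition det4 :: "(nat \<Rightarrow> nat \<Rightarrow> real) \<Rightarrow> real" where
  "det4 M = (\<Sum>a<4. \<Sum>b<4. \<Sum>c<4. \<Sum>d<4. levi a b c d * M 0 a * M 1 b * M 2 c * M 3 d)"

definition minv :: "(nat \<Rightarrow> nat \<Rightarrow> real) \<Rightarrow> nat \<Rightarrow> nat \<Rightarrow> real" where
  "minv M = (SOME N. \<forall>i<4. \<forall>j<4. (\<Sum>k<4. M i k * N k j) = (if i = j then 1 else 0))"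

definition riem_metric :: "(pt \<Rightarrow> nat \<Rightarrow> nat \<Rightarrow> real) \<Rightarrow> pt set \<Rightarrow> bool" where
  "riem_metric g U \<longleftrightarrow>
     (\<forall>i<4. \<forall>j<4. \<forall>p\<in>U. (\<lambda>q. g q i j) differentiable (at p)) \<and>
     (\<forall>p\<in>U. \<forall>i<4. \<forall>j<4. g p i j = g p j i) \<and>
     (\<forall>p\<in>U. \<forall>v::nat \<Rightarrow> real. (\<exists>i<4. v i \<noteq> 0) \<longrightarrow>
         (\<Sum>i<4. \<Sum>j<4. v i * g p i j * v j) > 0)"

text \<open>Hodge star of a 2-form (components, at one point) for metric G, with the orientation
  given by d theta dx1 dx2 dx3:
  (*w)_cd = sqrt(det G)/2 * sum_{a,b} w^{ab} eps_{abcd}.\<close>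
definition hodge2 :: "(nat \<Rightarrow> nat \<Rightarrow> real) \<Rightarrow> (nat \<Rightarrow> nat \<Rightarrow> real) \<Rightarrow> nat \<Rightarrow> nat \<Rightarrow> real" where
  "hodge2 G w c d = sqrt (det4 G) / 2 *
     (\<Sum>a<4. \<Sum>b<4. levi a b c d *
        (\<Sum>e<4. \<Sum>f<4. minv G a e * minv G b f * w e f))"

definition self_dual :: "(pt \<Rightarrow> nat \<Rightarrow> nat \<Rightarrow> real) \<Rightarrow> (nat \<Rightarrow> nat \<Rightarrow> pt \<Rightarrow> real) \<Rightarrow> pt set \<Rightarrow> bool" where
  "self_dual g w U \<longleftrightarrow>
     (\<forall>p\<in>U. \<forall>c<4. \<forall>d<4. hodge2 (g p) (\<lambda>a b. w a b p) c d = w c d p)"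

end

theory Submission
  imports Defs
begin

text \<open>At a point of \<open>C\<close> the first derivatives of \<open>\<omega>\<close> in the fibre directions are read off
  from the linear part alone, because \<open>Q\<close> vanishes to second order; along \<open>C\<close> they vanish
  since \<open>\<omega>\<close> does. Closedness \<open>d\<omega> = 0\<close> in the components \<open>123\<close> then gives
  \<open>L\<^sub>1\<^sub>1 + L\<^sub>2\<^sub>2 + L\<^sub>3\<^sub>3 = 0\<close>, and in the components \<open>0ij\<close> it gives \<open>L\<^sub>i\<^sub>j = L\<^sub>j\<^sub>i\<close>.
  Self-duality and the metric enter only through the prescribed shape of \<open>\<omega>\<close>.\<close>

lemma has_field_derivative_at_0_if_quadratic_remainder:
  fixes f :: "'a::real_normed_field \<Rightarrow> 'a"
  assumes "\<delta> > 0" and remainder: "\<And>t. norm t < \<delta> \<Longrightarrow> norm (f t - c * t) \<le> K * (norm t)\<^sup>2"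
  shows "(f has_field_derivative c) (at 0)"
proof -
  have f0: "f 0 = 0"
    using remainder[of 0] \<open>\<delta> > 0\<close> by simp
  have quotient_bound: "norm (f t / t - c) \<le> \<bar>K\<bar> * norm t" if "norm t < \<delta>" "t \<noteq> 0" for t
  proof -
    have "norm (f t / t - c) = norm (f t - c * t) / norm t"
      using \<open>t \<noteq> 0\<close> by (simp add: field_simps flip: norm_divide)
    also have "\<dots> \<le> K * (norm t)\<^sup>2 / norm t"
      using remainder[OF \<open>norm t < \<delta>\<close>] by (simp add: divide_right_mono)
    also have "\<dots> \<le> \<bar>K\<bar> * norm t"
      using \<open>t \<noteq> 0\<close> by (simp add: power2_eq_square mult_right_mono)
    finally show ?thesis .
  qed
  have "\<forall>\<^sub>F t in at 0. norm t < \<delta> \<and> t \<noteq> 0"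
    using \<open>\<delta> > 0\<close> unfolding eventually_at by (auto simp: dist_norm)
  then have "\<forall>\<^sub>F t in at 0. norm (f t / t - c) \<le> \<bar>K\<bar> * norm t"
    by (rule eventually_mono) (use quotient_bound in blast)
  moreover have "((\<lambda>t. \<bar>K\<bar> * norm t) \<longlongrightarrow> 0) (at (0::'a))"
    by (auto intro!: tendsto_eq_intros)
  ultimately have "((\<lambda>t. f t / t - c) \<longlongrightarrow> 0) (at 0)"
    by (rule Lim_null_comparison)
  then have "((\<lambda>t. f t / t) \<longlongrightarrow> c) (at 0)"
    by (simp add: Lim_null[symmetric])
  then show ?thesis
    by (simp add: has_field_derivative_iff f0)
qed

definition fibrewise_linear :: "(nat \<Rightarrow> real \<Rightarrow> real) \<Rightarrow> pt \<Rightarrow> real" where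
  "fibrewise_linear l p = (\<Sum>j\<in>{1,2,3}. l j (crd 0 p) * crd j p)"

lemma fibrewise_linear_uminus:
  "fibrewise_linear (\<lambda>j t. - l j t) p = - fibrewise_linear l p"
  by (simp add: fibrewise_linear_def)

lemma pd_fibrewise_linear_plus_quadratic:
  assumes f: "\<And>p. p \<in> NC \<Longrightarrow> f p = fibrewise_linear l p + q p"
    and q: "\<And>p. p \<in> NC \<Longrightarrow> \<bar>q p\<bar> \<le> K * rad2 p"
    and j: "j \<in> {1,2,3}"
  shows "pd j f (th, 0, 0, 0) = l j th"
proof -
  define line where "line t = (th, 0, 0, 0) + t *\<^sub>R ev j" for t
  have line_linear: "fibrewise_linear l (line t) = l j th * t"
    and line_rad2: "rad2 (line t) = t\<^sup>2" for t
    using j by (auto simp: line_def fibrewise_linear_def rad2_def crd_def ev_def)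
  have "norm (f (line t) - l j th * t) \<le> K * (norm t)\<^sup>2" if "norm t < 1" for t
  proof -
    have "line t \<in> NC"
      using that by (simp add: NC_def line_rad2 abs_square_less_1)
    then show ?thesis
      using f[of "line t"] q[of "line t"] line_linear line_rad2 by simp
  qed
  then have "((\<lambda>t. f (line t)) has_field_derivative l j th) (at 0)"
    by (intro has_field_derivative_at_0_if_quadratic_remainder[of 1]) auto
  then show ?thesis
    unfolding pd_def line_def[symmetric] by (rule DERIV_imp_deriv)
qed

theorem mainTheorem3:
  fixes g :: "pt \<Rightarrow> nat \<Rightarrow> nat \<Rightarrow> real"
    and w Q :: "nat \<Rightarrow> nat \<Rightarrow> pt \<Rightarrow> real"
    and L :: "nat \<Rightarrow> nat \<Rightarrow> real \<Rightarrow> real"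
  assumes metric: "riem_metric g NC"
    and g_periodic: "\<And>th x1 x2 x3 i j. g (th + 2 * pi, x1, x2, x3) i j = g (th, x1, x2, x3) i j"
    and orthonormal_on_C: "\<And>th i j. i < 4 \<Longrightarrow> j < 4 \<Longrightarrow>
                             g (th, 0, 0, 0) i j = (if i = j then 1 else 0)"
    and w_antisym: "\<And>a b p. w a b p = - w b a p"
    and w_periodic: "\<And>th x1 x2 x3 a b. w a b (th + 2 * pi, x1, x2, x3) = w a b (th, x1, x2, x3)"
    and closed: "closed_form2 w NC"
    and selfdual: "self_dual g w NC"
    and vanishes_on_C: "\<And>th a b. w a b (th, 0, 0, 0) = 0"
    and Q_antisym: "\<And>a b p. Q a b p = - Q b a p"
    and Q_order2: "\<exists>K. \<forall>p\<in>NC. \<forall>a<4. \<forall>b<4. \<bar>Q a b p\<bar> \<le> K * rad2 p"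
    and form:
      "\<And>p. p \<in> NC \<Longrightarrow>
         (let Li = (\<lambda>i. \<Sum>j\<in>{1,2,3}. L i j (crd 0 p) * crd j p) in
           w 0 1 p = Li 1 + Q 0 1 p \<and> w 2 3 p = Li 1 + Q 2 3 p \<and>
           w 0 2 p = Li 2 + Q 0 2 p \<and> w 3 1 p = Li 2 + Q 3 1 p \<and>
           w 0 3 p = Li 3 + Q 0 3 p \<and> w 1 2 p = Li 3 + Q 1 2 p)"
  shows "\<forall>th. (\<forall>i\<in>{1,2,3}. \<forall>j\<in>{1,2,3}. L i j th = L j i th) \<and>
              L 1 1 th + L 2 2 th + L 3 3 th = 0"
proof
  fix th
  let ?C = "(th, 0, 0, 0) :: pt"
  obtain K where K: "\<forall>p\<in>NC. \<forall>a<4. \<forall>b<4. \<bar>Q a b p\<bar> \<le> K * rad2 p"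
    using Q_order2 by blast
  have components:
    "w 0 1 p = fibrewise_linear (L 1) p + Q 0 1 p \<and> w 2 3 p = fibrewise_linear (L 1) p + Q 2 3 p \<and>
     w 0 2 p = fibrewise_linear (L 2) p + Q 0 2 p \<and> w 3 1 p = fibrewise_linear (L 2) p + Q 3 1 p \<and>
     w 0 3 p = fibrewise_linear (L 3) p + Q 0 3 p \<and> w 1 2 p = fibrewise_linear (L 3) p + Q 1 2 p"
    if "p \<in> NC" for p
    using form[OF that] by (simp add: Let_def fibrewise_linear_def)
  have closed_at_C: "pd a (w b c) ?C + pd b (w c a) ?C + pd c (w a b) ?C = 0"
    if "a < 4" "b < 4" "c < 4" for a b c
    using closed that unfolding closed_form2_def by (force simp: NC_def rad2_def crd_def)
  have along_C: "pd 0 (w a b) ?C = 0" for a b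
    by (simp add: pd_def ev_def vanishes_on_C)
  have pd_component: "pd j (w a b) ?C = L i j th"
    if "\<And>p. p \<in> NC \<Longrightarrow> w a b p = fibrewise_linear (L i) p + Q a b p" "a < 4" "b < 4" "j \<in> {1,2,3}"
    for a b i j
    using that K by (intro pd_fibrewise_linear_plus_quadratic[where K = K]) auto
  have pd_component_swapped: "pd j (w b a) ?C = - L i j th"
    if "\<And>p. p \<in> NC \<Longrightarrow> w a b p = fibrewise_linear (L i) p + Q a b p" "a < 4" "b < 4" "j \<in> {1,2,3}"
    for a b i j
    using that K w_antisym[of b a]
    by (intro pd_fibrewise_linear_plus_quadratic[where l = "\<lambda>j t. - L i j t" and q = "\<lambda>p. - Q a b p" and K = K])
       (auto simp: fibrewise_linear_uminus)
  have "L 1 1 th + L 2 2 th + L 3 3 th = 0"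
    using closed_at_C[of 1 2 3] pd_component[of 2 3 1 1] pd_component[of 3 1 2 2] pd_component[of 1 2 3 3] components by simp
  moreover have "L 1 2 th = L 2 1 th"
    using closed_at_C[of 0 1 2] along_C pd_component_swapped[of 0 2 2 1] pd_component[of 0 1 1 2] components by simp
  moreover have "L 2 3 th = L 3 2 th"
    using closed_at_C[of 0 2 3] along_C pd_component_swapped[of 0 3 3 2] pd_component[of 0 2 2 3] components by simp
  moreover have "L 1 3 th = L 3 1 th"
    using closed_at_C[of 0 3 1] along_C pd_component_swapped[of 0 1 1 3] pd_component[of 0 3 3 1] components by simp
  ultimately show "(\<forall>i\<in>{1,2,3}. \<forall>j\<in>{1,2,3}. L i j th = L j i th) \<and> L 1 1 th + L 2 2 th + L 3 3 th = 0"
    by auto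
qed

end
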